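(* Let $c_q=\gamma\min\big(\frac{\tau_0^2}{2\kappa},\frac{\tau_0}{\kappa_\nabla},\frac{1}{\kappa_{\mathrm{hess}}}\big)$ and suppose $k$ is such that $\|q_k-q^\star\|_2<c_q$. Then $$\mathrm{dist}(\xi,X_k)\le\frac{\kappa_\nabla}{\gamma}\|q_k-q^\star\|_2.$$ Moreover, for each $i\in\{1,\dots,s\}$, letting $B_i=\{x\in\Omega:\|x-\xi_i\|_2\le\tau_0\}$, the set $X_k$ contains at most one point of $B_i$, and $A^*q_k(x)$ has the same (nonzero) sign as $A^*q^\star(\xi_i)$ for all $x\in B_i$.
   Context: Setting: $\Omega\subseteq\mathbb{R}^d$ nonempty open convex; $\mathcal{M}(\Omega)$ finite signed Radon measures with total variation norm $\|\cdot\|_{\mathcal{M}}$, $\mathcal{M}(\Omega')$ those supported in $\Omega'\subseteq\Omega$; $a_1,\dots,a_m\in\mathcal{C}_0(\Omega)\cap\mathcal{C}^2(\Omega)$ with uniformly bounded first and second derivatives; $(A\mu)_i=\int a_i\,d\mu$, $A^*q=\sum_iq_ia_i$. $f:\mathbb{R}^m\to\mathbb{R}$ convex, bounded below, differentiable with $L$-Lipschitz gradient; $f^*$ its conjugate. $J(\mu)=\|\mu\|_{\mathcal{M}}+f(A\mu)$; $(\mathcal{P}(\Omega'))$: $\inf_{\mu\in\mathcal{M}(\Omega')}J(\mu)$; $(\mathcal{D}(\Omega'))$: $\sup\{-f^*(q):|A^*q(x)|\le1\ \forall x\in\Omega'\}$; $(\mathcal{P}),(\mathcal{D})$ for $\Omega'=\Omega$.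 Standing: all these problems used have solutions and no duality gap. Exchange algorithm: given $\Omega_0\subseteq\Omega$, $q_k$ is the solution of $(\mathcal{D}(\Omega_k))$, $X_k$ the set of local maximizers $x\in\Omega$ of $|A^*q_k|$ with $|A^*q_k(x)|>1$, $\Omega_{k+1}=\Omega_k\cup X_k$. For $Y,Z\subseteq\mathbb{R}^d$: $\mathrm{dist}(Y,Z)=\sup_{z\in Z}\inf_{y\in Y}\|y-z\|_2$; for a point $x$, $\mathrm{dist}(x,\xi)=\min_i\|x-\xi_i\|_2$. Constants: $\kappa=\sup_{\|q\|_2\le1}\|A^*q\|_\infty$, $\kappa_\nabla=\sup_{\|q\|_2\le1}\sup_{x}\|\nabla(A^*q)(x)\|_2$, $\kappa_{\mathrm{hess}}=\sup_{\|q\|_2\le1}\sup_x\|\nabla^2(A^*q)(x)\|_{\mathrm{op}}$. Source condition: $(\mathcal{P})$ has a unique solution $\mu^\star=\sum_{i=1}^s\alpha_i^\star\delta_{\xi_i}$ (distinct $\xi_i\in\Omega$, $\alpha_i^\star\ne0$), $\xi=\{\xi_1,\dots,\xi_s\}$; $q^\star$ is the solution of $(\mathcal{D})$; $|A^*q^\star(x)|=1$ iff $x\in\xi$; and there are $\tau_0>0,\gamma>0$ with: for all $x\in\Omega$ with $\mathrm{dist}(x,\xi)\le\tau_0$, $|A^*q^\star(x)|\ge\gamma\tau_0^2/2$ and $\nabla^2|A^*q^\star|(x)\preccurlyeq-\gamma\,\mathrm{Id}$; for all $x\in\Omega$ with $\mathrm{dist}(x,\xi)\ge\tau_0$, $|A^*q^\star(x)|\le1-\gamma\tau_0^2/2$.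 *)

theory Defs
  imports "HOL-Analysis.Analysis"
begin

text \<open>Adjoint operator: (A* q)(x) = sum_i q_i a_i(x); the index type 'm plays the role of {1..m}.\<close>
definition Astar :: "('m::finite \<Rightarrow> 'a \<Rightarrow> real) \<Rightarrow> real^'m \<Rightarrow> 'a \<Rightarrow> real" where
  "Astar a q x = (\<Sum>i\<in>UNIV. q $ i * a i x)"

definition grad :: "('a::euclidean_space \<Rightarrow> real) \<Rightarrow> 'a \<Rightarrow> 'a" where
  "grad g x = (THE v. (g has_derivative (\<lambda>h. v \<bullet> h)) (at x))"

definition hess :: "('a::euclidean_space \<Rightarrow> real) \<Rightarrow> 'a \<Rightarrow> 'a \<Rightarrow> 'a" where
  "hess g x = (THE L. (grad g has_derivative L) (at x))"

text \<open>C_0(Omega): continuous on Omega and vanishing at the boundary / at infinity.\<close>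
definition C0_on :: "'a::euclidean_space set \<Rightarrow> ('a \<Rightarrow> real) \<Rightarrow> bool" where
  "C0_on S g \<longleftrightarrow> continuous_on S g \<and>
     (\<forall>e>0. \<exists>K. compact K \<and> K \<subseteq> S \<and> (\<forall>x\<in>S - K. \<bar>g x\<bar> < e))"

definition C2_on :: "'a::euclidean_space set \<Rightarrow> ('a \<Rightarrow> real) \<Rightarrow> bool" where
  "C2_on S g \<longleftrightarrow> (\<forall>x\<in>S. g differentiable (at x) \<and> grad g differentiable (at x)) \<and>
     (\<forall>v. continuous_on S (\<lambda>x. hess g x v))"

definition fconj :: "(real^'m \<Rightarrow> real) \<Rightarrow> real^'m \<Rightarrow> ereal" where
  "fconj f q = (SUP y. ereal (q \<bullet> y - f y))"

definition dual_sol :: "('m::finite \<Rightarrow> 'a \<Rightarrow> real) \<Rightarrow> (real^'m \<Rightarrow> real) \<Rightarrow> 'a set \<Rightarrow> real^'m \<Rightarrow> bool" where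
  "dual_sol a f S q \<longleftrightarrow> (\<forall>x\<in>S. \<bar>Astar a q x\<bar> \<le> 1) \<and>
     (\<forall>p. (\<forall>x\<in>S. \<bar>Astar a p x\<bar> \<le> 1) \<longrightarrow> - fconj f p \<le> - fconj f q)"

text \<open>A finite signed Radon measure on Omega is represented by a pair (P,N) of finite Borel
  measures on the whole space, both concentrated on Omega; it denotes P - N.\<close>
definition signed_on :: "'a::euclidean_space set \<Rightarrow> 'a measure \<times> 'a measure \<Rightarrow> bool" where
  "signed_on S \<mu> \<longleftrightarrow>
     sets (fst \<mu>) = sets borel \<and> sets (snd \<mu>) = sets borel \<and>
     finite_measure (fst \<mu>) \<and> finite_measure (snd \<mu>) \<and>
     emeasure (fst \<mu>) (UNIV - S) = 0 \<and> emeasure (snd \<mu>) (UNIV - S) = 0"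

definition sval :: "'a measure \<times> 'a measure \<Rightarrow> 'a set \<Rightarrow> real" where
  "sval \<mu> A = measure (fst \<mu>) A - measure (snd \<mu>) A"

definition tvnorm :: "'a::euclidean_space measure \<times> 'a measure \<Rightarrow> real" where
  "tvnorm \<mu> = Sup {(\<Sum>A\<in>P. \<bar>sval \<mu> A\<bar>) | P. finite P \<and> P \<subseteq> sets borel \<and> disjoint P}"

definition Aop :: "'a::euclidean_space set \<Rightarrow> ('m::finite \<Rightarrow> 'a \<Rightarrow> real) \<Rightarrow> 'a measure \<times> 'a measure \<Rightarrow> real^'m" where
  "Aop S a \<mu> = (\<chi> i. set_lebesgue_integral (fst \<mu>) S (a i) - set_lebesgue_integral (snd \<mu>) S (a i))"

definition Jfun :: "'a::euclidean_space set \<Rightarrow> ('m::finite \<Rightarrow> 'a \<Rightarrow> real) \<Rightarrow> (real^'m \<Rightarrow> real)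
    \<Rightarrow> 'a measure \<times> 'a measure \<Rightarrow> real" where
  "Jfun S a f \<mu> = tvnorm \<mu> + f (Aop S a \<mu>)"

definition primal_sol :: "'a::euclidean_space set \<Rightarrow> ('m::finite \<Rightarrow> 'a \<Rightarrow> real) \<Rightarrow> (real^'m \<Rightarrow> real)
    \<Rightarrow> 'a measure \<times> 'a measure \<Rightarrow> bool" where
  "primal_sol S a f \<mu> \<longleftrightarrow> signed_on S \<mu> \<and>
     (\<forall>\<nu>. signed_on S \<nu> \<longrightarrow> Jfun S a f \<mu> \<le> Jfun S a f \<nu>)"

definition local_max_on :: "'a::metric_space set \<Rightarrow> ('a \<Rightarrow> real) \<Rightarrow> 'a \<Rightarrow> bool" where
  "local_max_on S g x \<longleftrightarrow> x \<in> S \<and> (\<exists>e>0. \<forall>y\<in>S. dist y x < e \<longrightarrow> g y \<le> g x)"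

definition Xset :: "('m::finite \<Rightarrow> 'a::metric_space \<Rightarrow> real) \<Rightarrow> 'a set \<Rightarrow> real^'m \<Rightarrow> 'a set" where
  "Xset a S q = {x\<in>S. local_max_on S (\<lambda>y. \<bar>Astar a q y\<bar>) x \<and> \<bar>Astar a q x\<bar> > 1}"

text \<open>dist(Y,Z) = sup_{z in Z} inf_{y in Y} ||y - z||, in the extended reals
  (so that sup of the empty set is -infinity and inf of the empty set is +infinity).\<close>
definition hdist :: "'a::metric_space set \<Rightarrow> 'a set \<Rightarrow> ereal" where
  "hdist Y Z = (SUP z\<in>Z. INF y\<in>Y. ereal (dist y z))"

end

theory Submission
  imports Defs
begin

(*
  Write D = q_k - q*. On Omega the values, gradients and Hessians of A*D are bounded by kappa |D|,
  kappa_grad |D| and kappa_hess |D|, and the closeness assumption makes kappa |D| < gamma tau0^2/2 and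
  kappa_hess |D| < gamma. Away from the support |A*q*| <= 1 - gamma tau0^2/2, hence |A*q_k| < 1 there
  and every point of X_k lies in some ball B_i. On the convex, hence connected, set B_i the function
  A*q* has no zero, so it keeps the sign sigma of A*q*(xi_i), and the perturbation cannot change it.
  The Hessian of sigma A*q_k is bounded above by -(gamma - kappa_hess |D|), so by the mean value
  theorem along segments it has at most one critical point in B_i. Finally, at x in X_k the gradient
  of sigma A*q* is -sigma grad A*D(x), while it vanishes at xi_i; the gamma-concavity of sigma A*q*
  along the segment then gives gamma |x - xi_i|^2 <= kappa_grad |D| |x - xi_i|.
*)

lemma grad_eqI:
  fixes g :: "'a::euclidean_space \<Rightarrow> real"
  assumes "(g has_derivative (\<lambda>h. v \<bullet> h)) (at x)"
  shows "grad g x = v"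
  unfolding grad_def
proof (rule the_equality)
  show "(g has_derivative (\<lambda>h. v \<bullet> h)) (at x)" by fact
  fix w assume "(g has_derivative (\<lambda>h. w \<bullet> h)) (at x)"
  then have "(\<lambda>h. w \<bullet> h) = (\<lambda>h. v \<bullet> h)" using has_derivative_unique assms by blast
  then have "(w - v) \<bullet> (w - v) = 0" by (metis inner_diff_left right_minus_eq)
  then show "w = v" by simp
qed

lemma has_derivative_grad:
  fixes g :: "'a::euclidean_space \<Rightarrow> real"
  assumes "g differentiable (at x)"
  shows "(g has_derivative (\<lambda>h. grad g x \<bullet> h)) (at x)"
proof -
  obtain D where D: "(g has_derivative D) (at x)" using assms differentiable_def by blast
  have lin: "linear D" using has_derivative_linear[OF D] .
  define v where "v = (\<Sum>b\<in>Basis. D b *\<^sub>R b)"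
  have "D = (\<lambda>h. v \<bullet> h)"
  proof
    fix h
    have "D h = D (\<Sum>b\<in>Basis. (h \<bullet> b) *\<^sub>R b)" by (simp add: euclidean_representation)
    also have "\<dots> = (\<Sum>b\<in>Basis. (h \<bullet> b) * D b)" using lin by (simp add: linear_sum linear_scale)
    also have "\<dots> = v \<bullet> h"
      by (simp only: v_def inner_sum_left inner_scaleR_left) (simp add: mult.commute inner_commute)
    finally show "D h = v \<bullet> h" .
  qed
  with D have "(g has_derivative (\<lambda>h. v \<bullet> h)) (at x)" by simp
  with grad_eqI show ?thesis by metis
qed

lemma hess_eqI: "(grad g has_derivative L) (at x) \<Longrightarrow> hess g x = L"
  unfolding hess_def using has_derivative_unique by blast

lemma has_derivative_hess: "grad g differentiable (at x) \<Longrightarrow> (grad g has_derivative hess g x) (at x)"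
  using hess_eqI unfolding differentiable_def by blast

lemma local_max_abs_imp_zero_derivative:
  fixes g :: "'a::real_inner \<Rightarrow> real"
  assumes max: "local_max_on S (\<lambda>y. \<bar>g y\<bar>) z" and S: "open S"
    and deriv: "(g has_derivative (\<lambda>h. v \<bullet> h)) (at z)"
  shows "v = 0"
proof -
  \<comment> \<open>whatever the sign of \<open>g z\<close>, the function \<open>\<sigma> * g\<close> has a local maximum at \<open>z\<close>\<close>
  define \<sigma> :: real where "\<sigma> = (if g z \<ge> 0 then 1 else -1)"
  obtain e where e: "e > 0" and z: "z \<in> S"
    and le: "\<And>y. y \<in> S \<Longrightarrow> dist y z < e \<Longrightarrow> \<bar>g y\<bar> \<le> \<bar>g z\<bar>"
    using max unfolding local_max_on_def by blast
  have max_\<sigma>: "\<forall>y\<in>S \<inter> ball z e. \<sigma> * g y \<le> \<sigma> * g z"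
  proof
    fix y assume "y \<in> S \<inter> ball z e"
    then have "\<bar>g y\<bar> \<le> \<bar>g z\<bar>" using le by (simp add: dist_commute)
    then show "\<sigma> * g y \<le> \<sigma> * g z" by (simp add: \<sigma>_def abs_le_iff) arith
  qed
  have "((\<lambda>y. \<sigma> * g y) has_derivative (\<lambda>h. \<sigma> * (v \<bullet> h))) (at z)"
    using deriv by (rule has_derivative_mult_right)
  then have "(\<lambda>h. \<sigma> * (v \<bullet> h)) = (\<lambda>h. 0)"
    by (rule differential_zero_maxmin[where S = "S \<inter> ball z e", rotated 2])
      (use S e z max_\<sigma> in auto)
  then have "\<sigma> * (v \<bullet> v) = 0" by metis
  then show ?thesis by (simp add: \<sigma>_def split: if_splits)
qed

lemma mean_value_inner_segment:
  fixes G :: "'a::real_inner \<Rightarrow> 'a"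
  assumes deriv: "\<And>p. p \<in> closed_segment x y \<Longrightarrow> (G has_derivative G' p) (at p)"
  shows "\<exists>p\<in>closed_segment x y. (G y - G x) \<bullet> (y - x) = (y - x) \<bullet> G' p (y - x)"
proof -
  define u where "u = y - x"
  define path where "path t = x + t *\<^sub>R u" for t :: real
  have on_segment: "path t \<in> closed_segment x y" if "0 \<le> t" "t \<le> 1" for t
    using that unfolding in_segment path_def u_def by (intro exI[of _ t]) (simp add: algebra_simps)
  have deriv_path: "((\<lambda>t. G (path t) \<bullet> u) has_derivative (\<lambda>h. G' (path t) (h *\<^sub>R u) \<bullet> u))
      (at t within {0..1})" if "0 \<le> t" "t \<le> 1" for t
  proof -
    have "(path has_derivative (\<lambda>h. h *\<^sub>R u)) (at t)"
      unfolding path_def by (auto intro!: derivative_eq_intros)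
    from has_derivative_compose[OF this deriv[OF on_segment[OF that]]]
    have "((\<lambda>t. G (path t) \<bullet> u) has_derivative (\<lambda>h. G' (path t) (h *\<^sub>R u) \<bullet> u)) (at t)"
      by (rule has_derivative_inner_left)
    then show ?thesis by (rule has_derivative_at_withinI)
  qed
  obtain t where t: "t \<in> {0<..<1}"
    and eq: "G (path 1) \<bullet> u - G (path 0) \<bullet> u = G' (path t) ((1 - 0) *\<^sub>R u) \<bullet> u"
    using mvt_simple[OF zero_less_one deriv_path] by blast
  show ?thesis
  proof
    show "path t \<in> closed_segment x y" using t by (intro on_segment) auto
    show "(G y - G x) \<bullet> (y - x) = (y - x) \<bullet> G' (path t) (y - x)"
      using eq unfolding path_def u_def inner_diff_left[symmetric] by (simp add: inner_commute)
  qed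
qed

lemma connected_nonvanishing_sgn_eq:
  fixes g :: "'a::topological_space \<Rightarrow> real"
  assumes "connected S" "continuous_on S g" "\<And>x. x \<in> S \<Longrightarrow> g x \<noteq> 0" "x \<in> S" "y \<in> S"
  shows "sgn (g x) = sgn (g y)"
proof (rule ccontr)
  assume "sgn (g x) \<noteq> sgn (g y)"
  then have "g x \<le> 0 \<and> 0 \<le> g y \<or> g y \<le> 0 \<and> 0 \<le> g x"
    by (auto simp: sgn_if split: if_splits)
  moreover have "connected (g ` S)" using assms(2,1) by (rule connected_continuous_image)
  then have "t \<in> g ` S" if "a \<in> g ` S" "b \<in> g ` S" "a \<le> t" "t \<le> b" for a b t
    using that unfolding connected_iff_interval by blast
  ultimately have "0 \<in> g ` S" using assms(4,5) by blast
  with assms(3) show False by auto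
qed

lemma C0_on_bounded:
  assumes "C0_on S g"
  shows "\<exists>B. \<forall>x\<in>S. \<bar>g x\<bar> \<le> B"
proof -
  obtain K where K: "compact K" "K \<subseteq> S" and small: "\<And>x. x \<in> S - K \<Longrightarrow> \<bar>g x\<bar> < 1"
    using assms unfolding C0_on_def by (meson zero_less_one)
  have "continuous_on K g" using assms K(2) unfolding C0_on_def by (blast intro: continuous_on_subset)
  with K(1) have "compact (g ` K)" by (rule compact_continuous_image[rotated])
  then obtain B where B: "\<forall>y\<in>g ` K. norm y \<le> B" using compact_imp_bounded bounded_iff by metis
  show ?thesis
  proof (intro exI ballI)
    fix x assume "x \<in> S"
    then show "\<bar>g x\<bar> \<le> max B 1" using B small[of x] by (cases "x \<in> K") force+
  qed
qed

lemma norm_sum_component_scaleR_le: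
  fixes q :: "real^'m::finite" and f :: "'m \<Rightarrow> 'b::real_normed_vector"
  assumes q: "norm q \<le> 1" and f: "\<And>i. norm (f i) \<le> B i"
  shows "norm (\<Sum>i\<in>UNIV. q $ i *\<^sub>R f i) \<le> sum B UNIV"
proof -
  have "norm (\<Sum>i\<in>UNIV. q $ i *\<^sub>R f i) \<le> (\<Sum>i\<in>UNIV. \<bar>q $ i\<bar> * norm (f i))"
    by (rule order_trans[OF norm_sum]) simp
  also have "\<dots> \<le> sum B UNIV"
  proof (rule sum_mono)
    fix i
    have "\<bar>q $ i\<bar> \<le> 1" using component_le_norm_cart[of q i] q by linarith
    then have "\<bar>q $ i\<bar> * norm (f i) \<le> 1 * B i" by (rule mult_mono) (use f[of i] in auto)
    then show "\<bar>q $ i\<bar> * norm (f i) \<le> B i" by simp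
  qed
  finally show ?thesis .
qed

lemma le_Sup_unit_ball_mult_norm:
  fixes F :: "'v::real_normed_vector \<Rightarrow> 'x \<Rightarrow> real"
  assumes hom: "\<And>c q x. x \<in> S \<Longrightarrow> F (c *\<^sub>R q) x = \<bar>c\<bar> * F q x"
    and bound: "\<And>q x. norm q \<le> 1 \<Longrightarrow> x \<in> S \<Longrightarrow> F q x \<le> B"
    and x: "x \<in> S"
  shows "F q x \<le> Sup {F q x | q x. norm q \<le> 1 \<and> x \<in> S} * norm q"
proof (cases "q = 0")
  case True
  then show ?thesis using hom[OF x, of 0 0] by simp
next
  case False
  define q' where "q' = (1 / norm q) *\<^sub>R q"
  have "norm q' = 1" using False by (simp add: q'_def)
  then have "F q' x \<in> {F q x | q x. norm q \<le> 1 \<and> x \<in> S}" using x by fastforce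
  moreover have "bdd_above {F q x | q x. norm q \<le> 1 \<and> x \<in> S}"
    using bound by (intro bdd_aboveI[where M = B]) blast
  ultimately have "F q' x \<le> Sup {F q x | q x. norm q \<le> 1 \<and> x \<in> S}" by (rule cSup_upper)
  moreover have "F q x = norm q * F q' x"
    using hom[OF x, of "norm q" q'] False by (simp add: q'_def)
  ultimately show ?thesis by (simp add: mult.commute mult_left_mono)
qed

lemma hdist_le:
  assumes "\<And>z. z \<in> Z \<Longrightarrow> \<exists>y\<in>Y. dist y z \<le> r"
  shows "hdist Y Z \<le> ereal r"
  unfolding hdist_def
proof (rule SUP_least)
  fix z assume "z \<in> Z"
  then obtain y where y: "y \<in> Y" and le: "dist y z \<le> r" using assms by blast
  show "(INF y\<in>Y. ereal (dist y z)) \<le> ereal r" using le by (intro INF_lower2[OF y]) simp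
qed

lemma bounds_of_less_mult_min:
  fixes n \<kappa> \<kappa>' \<kappa>'' \<gamma> \<tau> :: real
  assumes n: "n < \<gamma> * min (\<tau>\<^sup>2 / (2 * \<kappa>)) (min (\<tau> / \<kappa>') (1 / \<kappa>''))"
    and "0 \<le> n" "0 < \<gamma>" "0 < \<tau>"
  shows "\<kappa> * n < \<gamma> * \<tau>\<^sup>2 / 2" "\<kappa>'' * n < \<gamma>"
proof -
  define m where "m = min (\<tau>\<^sup>2 / (2 * \<kappa>)) (min (\<tau> / \<kappa>') (1 / \<kappa>''))"
  have "0 < \<gamma> * m" using n assms(2) by (simp add: m_def)
  then have "0 < m" using assms(3) by (simp add: zero_less_mult_iff)
  then have pos: "0 < \<kappa>" "0 < \<kappa>''"
    using assms(4) by (auto simp: m_def zero_less_divide_iff)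
  have "m \<le> \<tau>\<^sup>2 / (2 * \<kappa>)" "m \<le> 1 / \<kappa>''" by (simp_all add: m_def)
  then have "\<gamma> * m \<le> \<gamma> * (\<tau>\<^sup>2 / (2 * \<kappa>))" "\<gamma> * m \<le> \<gamma> * (1 / \<kappa>'')"
    using mult_left_mono[OF _ less_imp_le[OF assms(3)]] by blast+
  then have "n < \<gamma> * (\<tau>\<^sup>2 / (2 * \<kappa>))" "n < \<gamma> * (1 / \<kappa>'')"
    using n by (simp_all add: m_def)
  with pos show "\<kappa> * n < \<gamma> * \<tau>\<^sup>2 / 2" "\<kappa>'' * n < \<gamma>"
    by (simp_all add: field_simps)
qed

definition Astar_grad :: "('m::finite \<Rightarrow> 'a::euclidean_space \<Rightarrow> real) \<Rightarrow> real^'m \<Rightarrow> 'a \<Rightarrow> 'a" where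
  "Astar_grad a q x = (\<Sum>i\<in>UNIV. q $ i *\<^sub>R grad (a i) x)"

definition Astar_hess :: "('m::finite \<Rightarrow> 'a::euclidean_space \<Rightarrow> real) \<Rightarrow> real^'m \<Rightarrow> 'a \<Rightarrow> 'a \<Rightarrow> 'a" where
  "Astar_hess a q x = (\<lambda>v. \<Sum>i\<in>UNIV. q $ i *\<^sub>R hess (a i) x v)"

lemma Astar_scaleR: "Astar a (c *\<^sub>R q) x = c * Astar a q x"
  by (simp add: Astar_def sum_distrib_left mult.assoc)

lemma Astar_diff: "Astar a (q - p) x = Astar a q x - Astar a p x"
  by (simp add: Astar_def sum_subtractf left_diff_distrib)

lemma Astar_grad_scaleR: "Astar_grad a (c *\<^sub>R q) x = c *\<^sub>R Astar_grad a q x"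
  by (simp add: Astar_grad_def scaleR_sum_right)

lemma Astar_grad_diff: "Astar_grad a (q - p) x = Astar_grad a q x - Astar_grad a p x"
  by (simp add: Astar_grad_def sum_subtractf scaleR_diff_left)

lemma Astar_hess_scaleR: "Astar_hess a (c *\<^sub>R q) x v = c *\<^sub>R Astar_hess a q x v"
  by (simp add: Astar_hess_def scaleR_sum_right)

lemma Astar_hess_diff: "Astar_hess a (q - p) x v = Astar_hess a q x v - Astar_hess a p x v"
  by (simp add: Astar_hess_def sum_subtractf scaleR_diff_left)

lemma abs_Astar_le_Sup:
  assumes C0: "\<And>i. C0_on \<Omega> (a i)" and x: "x \<in> \<Omega>"
  shows "\<bar>Astar a q x\<bar> \<le> Sup {\<bar>Astar a q x\<bar> | q x. norm q \<le> 1 \<and> x \<in> \<Omega>} * norm q"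
proof -
  obtain B where B: "\<And>i x. x \<in> \<Omega> \<Longrightarrow> \<bar>a i x\<bar> \<le> B i" using C0_on_bounded[OF C0] by metis
  have bound: "\<bar>Astar a q x\<bar> \<le> sum B UNIV" if "norm q \<le> 1" "x \<in> \<Omega>" for q x
    using norm_sum_component_scaleR_le[OF that(1), of "\<lambda>i. a i x" B] B[OF that(2)]
    by (simp add: Astar_def)
  show ?thesis
    by (rule le_Sup_unit_ball_mult_norm[OF _ bound x]) (simp add: Astar_scaleR abs_mult)
qed

lemma Xset_subset_near_support:
  assumes far: "\<And>x. x \<in> \<Omega> \<Longrightarrow> ereal \<tau> \<le> (INF i\<in>I. ereal (norm (x - \<xi> i))) \<Longrightarrow>
      \<bar>Astar a qstar x\<bar> \<le> 1 - c"
    and close: "\<And>x. x \<in> \<Omega> \<Longrightarrow> \<bar>Astar a (q - qstar) x\<bar> < c"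
  shows "Xset a \<Omega> q \<subseteq> (\<Union>i\<in>I. ball (\<xi> i) \<tau>)"
proof
  fix z assume "z \<in> Xset a \<Omega> q"
  then have z: "z \<in> \<Omega>" and big: "1 < \<bar>Astar a q z\<bar>" by (auto simp: Xset_def)
  show "z \<in> (\<Union>i\<in>I. ball (\<xi> i) \<tau>)"
  proof (rule ccontr)
    assume "z \<notin> (\<Union>i\<in>I. ball (\<xi> i) \<tau>)"
    then have "ereal \<tau> \<le> (INF i\<in>I. ereal (norm (z - \<xi> i)))"
      by (auto simp: le_INF_iff dist_norm norm_minus_commute not_less)
    have "\<bar>Astar a q z\<bar> \<le> \<bar>Astar a qstar z\<bar> + \<bar>Astar a (q - qstar) z\<bar>"
      unfolding Astar_diff by linarith
    also have "\<dots> < 1" using far[OF z \<open>ereal \<tau> \<le> _\<close>] close[OF z] by linarith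
    finally show False using big by linarith
  qed
qed

locale C2_family =
  fixes \<Omega> :: "'a::euclidean_space set" and a :: "'m::finite \<Rightarrow> 'a \<Rightarrow> real"
  assumes open_domain: "open \<Omega>" and C2: "\<And>i. C2_on \<Omega> (a i)"
begin

lemma has_derivative_Astar:
  assumes "x \<in> \<Omega>"
  shows "(Astar a q has_derivative (\<lambda>h. Astar_grad a q x \<bullet> h)) (at x)"
proof -
  have "(a i has_derivative (\<lambda>h. grad (a i) x \<bullet> h)) (at x)" for i
    using C2[of i] assms unfolding C2_on_def by (auto intro: has_derivative_grad)
  then have "((\<lambda>y. \<Sum>i\<in>UNIV. q $ i * a i y)
      has_derivative (\<lambda>h. \<Sum>i\<in>UNIV. q $ i * (grad (a i) x \<bullet> h))) (at x)"
    by (intro has_derivative_sum has_derivative_mult_right)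
  then show ?thesis
    by (simp add: Astar_def[abs_def] Astar_grad_def inner_sum_left)
qed

lemma has_derivative_grad_a: "x \<in> \<Omega> \<Longrightarrow> (grad (a i) has_derivative hess (a i) x) (at x)"
  using C2[of i] unfolding C2_on_def by (auto intro: has_derivative_hess)

lemma bounded_linear_hess: "x \<in> \<Omega> \<Longrightarrow> bounded_linear (hess (a i) x)"
  using has_derivative_grad_a by (rule has_derivative_bounded_linear)

lemma has_derivative_Astar_grad:
  assumes "x \<in> \<Omega>"
  shows "(Astar_grad a q has_derivative Astar_hess a q x) (at x)"
proof -
  have "((\<lambda>y. \<Sum>i\<in>UNIV. q $ i *\<^sub>R grad (a i) y) has_derivative Astar_hess a q x) (at x)"
    unfolding Astar_hess_def
    by (intro has_derivative_sum has_derivative_scaleR_right has_derivative_grad_a assms)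
  then show ?thesis by (simp add: Astar_grad_def[abs_def])
qed

lemma grad_Astar: "x \<in> \<Omega> \<Longrightarrow> grad (Astar a q) x = Astar_grad a q x"
  by (intro grad_eqI has_derivative_Astar)

lemma hess_Astar: "x \<in> \<Omega> \<Longrightarrow> hess (Astar a q) x = Astar_hess a q x"
  by (intro hess_eqI has_derivative_transform_within_open[OF has_derivative_Astar_grad open_domain])
    (auto simp: grad_Astar)

lemma bounded_linear_Astar_hess: "x \<in> \<Omega> \<Longrightarrow> bounded_linear (Astar_hess a q x)"
  using has_derivative_Astar_grad by (rule has_derivative_bounded_linear)

lemma continuous_on_Astar: "continuous_on \<Omega> (Astar a q)"
  using has_derivative_Astar has_derivative_continuous continuous_at_imp_continuous_on by blast

lemma hess_abs_Astar:
  assumes w: "w \<in> \<Omega>" and pos: "Astar a q w > 0"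
  shows "hess (\<lambda>y. \<bar>Astar a q y\<bar>) w = Astar_hess a q w"
proof -
  define U where "U = \<Omega> \<inter> Astar a q -` {0<..}"
  have U: "open U" "w \<in> U"
    using continuous_open_preimage[OF continuous_on_Astar open_domain] w pos by (auto simp: U_def)
  have "grad (\<lambda>y. \<bar>Astar a q y\<bar>) y = Astar_grad a q y" if "y \<in> U" for y
    by (intro grad_eqI has_derivative_transform_within_open[OF has_derivative_Astar U(1) that])
      (use that in \<open>auto simp: U_def\<close>)
  then show ?thesis
    by (intro hess_eqI has_derivative_transform_within_open[OF has_derivative_Astar_grad U])
      (use w in auto)
qed

lemma Astar_grad_Xset: "z \<in> Xset a \<Omega> q \<Longrightarrow> Astar_grad a q z = 0"
  unfolding Xset_def
  by (auto intro: local_max_abs_imp_zero_derivative[OF _ open_domain has_derivative_Astar])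

lemma norm_Astar_grad_le_Sup:
  assumes bdd: "\<And>i. bounded (grad (a i) ` \<Omega>)" and x: "x \<in> \<Omega>"
  shows "norm (Astar_grad a q x)
    \<le> Sup {norm (grad (Astar a q) x) | q x. norm q \<le> 1 \<and> x \<in> \<Omega>} * norm q"
proof -
  obtain B where B: "\<And>i x. x \<in> \<Omega> \<Longrightarrow> norm (grad (a i) x) \<le> B i"
    using bdd unfolding bounded_iff by (metis imageI)
  have "norm (grad (Astar a q) x)
    \<le> Sup {norm (grad (Astar a q) x) | q x. norm q \<le> 1 \<and> x \<in> \<Omega>} * norm q"
  proof (rule le_Sup_unit_ball_mult_norm[OF _ _ x])
    show "norm (grad (Astar a q) x) \<le> sum B UNIV" if "norm q \<le> 1" "x \<in> \<Omega>" for q x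
      using norm_sum_component_scaleR_le[OF that(1) B[OF that(2)]] that(2)
      by (simp add: grad_Astar Astar_grad_def)
  qed (simp add: grad_Astar Astar_grad_scaleR)
  with x show ?thesis by (simp add: grad_Astar)
qed

lemma norm_Astar_hess_le_Sup:
  assumes bdd: "\<And>i. bounded ((\<lambda>x. onorm (hess (a i) x)) ` \<Omega>)" and x: "x \<in> \<Omega>"
  shows "norm (Astar_hess a q x v)
    \<le> Sup {onorm (hess (Astar a q) x) | q x. norm q \<le> 1 \<and> x \<in> \<Omega>} * norm q * norm v"
proof -
  obtain B where B: "\<And>i x. x \<in> \<Omega> \<Longrightarrow> norm (onorm (hess (a i) x)) \<le> B i"
    using bdd unfolding bounded_iff by (metis imageI)
  have "onorm (hess (Astar a q) x)
    \<le> Sup {onorm (hess (Astar a q) x) | q x. norm q \<le> 1 \<and> x \<in> \<Omega>} * norm q"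
  proof (rule le_Sup_unit_ball_mult_norm[OF _ _ x])
    show "onorm (hess (Astar a q) x) \<le> sum B UNIV" if "norm q \<le> 1" "x \<in> \<Omega>" for q x
    proof (rule onorm_le)
      fix v
      have "norm (hess (a i) x v) \<le> B i * norm v" for i
        using onorm[OF bounded_linear_hess[OF that(2)], of i v]
          abs_le_D1[OF B[OF that(2), of i, unfolded real_norm_def]]
        by (meson mult_right_mono norm_ge_zero order_trans)
      from norm_sum_component_scaleR_le[OF that(1) this]
      show "norm (hess (Astar a q) x v) \<le> sum B UNIV * norm v"
        using that(2) by (simp add: hess_Astar Astar_hess_def sum_distrib_right)
    qed
  qed (simp add: hess_Astar Astar_hess_scaleR onorm_scaleR bounded_linear_Astar_hess)
  with x show ?thesis
    using onorm[OF bounded_linear_Astar_hess[OF x], of q v]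
    by (simp add: hess_Astar) (meson mult_right_mono norm_ge_zero order_trans)
qed

end

text \<open>The source condition localised at one point \<open>\<xi>\<close> of the support, with \<open>\<tau> = \<tau>\<^sub>0\<close>
  and \<open>c = \<gamma> \<tau>\<^sub>0\<^sup>2 / 2\<close>.\<close>

locale isolated_peak = C2_family \<Omega> a
  for \<Omega> :: "'a::euclidean_space set" and a :: "'m::finite \<Rightarrow> 'a \<Rightarrow> real" +
  fixes qstar :: "real^'m" and \<xi> :: 'a and \<tau> \<gamma> c :: real
  assumes convex_domain: "convex \<Omega>" and peak_in_domain: "\<xi> \<in> \<Omega>"
    and peak_value: "\<bar>Astar a qstar \<xi>\<bar> = 1"
    and dual_feasible: "\<And>x. x \<in> \<Omega> \<Longrightarrow> \<bar>Astar a qstar x\<bar> \<le> 1"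
    and gamma_pos: "0 < \<gamma>" and c_pos: "0 < c"
    and near_peak: "\<And>x. x \<in> \<Omega> \<Longrightarrow> norm (x - \<xi>) \<le> \<tau> \<Longrightarrow>
      c \<le> \<bar>Astar a qstar x\<bar> \<and> (\<forall>v. v \<bullet> hess (\<lambda>y. \<bar>Astar a qstar y\<bar>) x v \<le> - \<gamma> * (norm v)\<^sup>2)"
begin

abbreviation peak_sign :: real where "peak_sign \<equiv> sgn (Astar a qstar \<xi>)"

lemma peak_sign_cases: "peak_sign = 1 \<or> peak_sign = -1"
  using peak_value by (auto simp: sgn_if)

lemma mem_peak_nbhd: "x \<in> \<Omega> \<inter> cball \<xi> \<tau> \<longleftrightarrow> x \<in> \<Omega> \<and> norm (x - \<xi>) \<le> \<tau>"
  by (simp add: dist_norm norm_minus_commute)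

lemma closed_segment_subset_peak_nbhd:
  assumes "x \<in> \<Omega>" "norm (x - \<xi>) \<le> \<tau>" "y \<in> \<Omega>" "norm (y - \<xi>) \<le> \<tau>"
  shows "closed_segment x y \<subseteq> \<Omega> \<inter> cball \<xi> \<tau>"
  using assms convex_domain
  by (intro closed_segment_subset) (auto simp: convex_Int dist_norm norm_minus_commute)

lemma abs_Astar_near_peak:
  assumes x: "x \<in> \<Omega>" "norm (x - \<xi>) \<le> \<tau>"
  shows "\<bar>Astar a qstar x\<bar> = peak_sign * Astar a qstar x"
proof -
  have sgn_eq: "sgn (Astar a qstar x) = peak_sign"
  proof (rule connected_nonvanishing_sgn_eq[where S = "\<Omega> \<inter> cball \<xi> \<tau>"])
    show "connected (\<Omega> \<inter> cball \<xi> \<tau>)"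
      using convex_domain by (intro convex_connected convex_Int) auto
    show "continuous_on (\<Omega> \<inter> cball \<xi> \<tau>) (Astar a qstar)"
      using continuous_on_Astar by (rule continuous_on_subset) auto
    show "Astar a qstar y \<noteq> 0" if "y \<in> \<Omega> \<inter> cball \<xi> \<tau>" for y
      using that near_peak[of y] c_pos unfolding mem_peak_nbhd by fastforce
    show "x \<in> \<Omega> \<inter> cball \<xi> \<tau>" unfolding mem_peak_nbhd using x by simp
    show "\<xi> \<in> \<Omega> \<inter> cball \<xi> \<tau>"
      using peak_in_domain order_trans[OF norm_ge_zero x(2)] by simp
  qed
  show ?thesis unfolding sgn_eq[symmetric] by (simp add: sgn_if abs_if)
qed

lemma hess_Astar_near_peak:
  assumes p: "p \<in> \<Omega>" "norm (p - \<xi>) \<le> \<tau>"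
  shows "v \<bullet> Astar_hess a (peak_sign *\<^sub>R qstar) p v \<le> - \<gamma> * (norm v)\<^sup>2"
proof -
  have "Astar a (peak_sign *\<^sub>R qstar) p = \<bar>Astar a qstar p\<bar>"
    using abs_Astar_near_peak[OF p] by (simp add: Astar_scaleR)
  then have pos: "0 < Astar a (peak_sign *\<^sub>R qstar) p" using near_peak[OF p] c_pos by linarith
  have "(\<lambda>y. \<bar>Astar a (peak_sign *\<^sub>R qstar) y\<bar>) = (\<lambda>y. \<bar>Astar a qstar y\<bar>)"
    using peak_sign_cases by (auto simp: Astar_scaleR abs_mult)
  then have "hess (\<lambda>y. \<bar>Astar a qstar y\<bar>) p = Astar_hess a (peak_sign *\<^sub>R qstar) p"
    using hess_abs_Astar[OF p(1) pos] by simp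
  with near_peak[OF p] show ?thesis by simp
qed

lemma Astar_grad_peak: "Astar_grad a qstar \<xi> = 0"
proof (rule local_max_abs_imp_zero_derivative)
  show "local_max_on \<Omega> (\<lambda>y. \<bar>Astar a qstar y\<bar>) \<xi>"
    unfolding local_max_on_def using peak_in_domain dual_feasible peak_value
    by (auto intro: exI[of _ 1])
qed (use open_domain has_derivative_Astar[OF peak_in_domain] in auto)

lemma sgn_Astar_perturbed:
  assumes x: "x \<in> \<Omega>" "norm (x - \<xi>) \<le> \<tau>" and close: "\<bar>Astar a (q - qstar) x\<bar> < c"
  shows "Astar a q x \<noteq> 0 \<and> sgn (Astar a q x) = sgn (Astar a qstar \<xi>)"
proof -
  have "c \<le> peak_sign * Astar a qstar x"
    using near_peak[OF x] abs_Astar_near_peak[OF x] by simp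
  moreover have "\<bar>peak_sign * Astar a (q - qstar) x\<bar> < c"
    using close peak_sign_cases by (auto simp: abs_mult)
  moreover have "peak_sign * Astar a q x
      = peak_sign * Astar a qstar x + peak_sign * Astar a (q - qstar) x"
    by (simp add: Astar_diff algebra_simps)
  ultimately have "0 < peak_sign * Astar a q x"
    using abs_ge_minus_self[of "peak_sign * Astar a (q - qstar) x"] by linarith
  then show ?thesis using peak_sign_cases by (auto simp: sgn_if split: if_splits)
qed

lemma Xset_near_peak_unique:
  assumes hess_close: "\<And>p v. p \<in> \<Omega> \<Longrightarrow> norm (p - \<xi>) \<le> \<tau> \<Longrightarrow>
      norm (Astar_hess a (q - qstar) p v) \<le> h * norm v"
    and h: "h < \<gamma>"
    and x: "x \<in> Xset a \<Omega> q" "norm (x - \<xi>) \<le> \<tau>"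
    and y: "y \<in> Xset a \<Omega> q" "norm (y - \<xi>) \<le> \<tau>"
  shows "x = y"
proof (rule ccontr)
  assume "x \<noteq> y"
  define G where "G = Astar_grad a (peak_sign *\<^sub>R q)"
  define H where "H = Astar_hess a (peak_sign *\<^sub>R q)"
  have "x \<in> \<Omega>" "y \<in> \<Omega>" using x y by (simp_all add: Xset_def)
  note segment = closed_segment_subset_peak_nbhd[OF this(1) x(2) this(2) y(2)]
  have strictly_concave: "v \<bullet> H p v \<le> - (\<gamma> - h) * (norm v)\<^sup>2"
    if "p \<in> closed_segment x y" for p v
  proof -
    have p: "p \<in> \<Omega>" "norm (p - \<xi>) \<le> \<tau>" using that segment mem_peak_nbhd by blast+
    have "\<bar>v \<bullet> Astar_hess a (q - qstar) p v\<bar> \<le> norm v * (h * norm v)"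
      using Cauchy_Schwarz_ineq2 hess_close[OF p] by (metis mult_left_mono norm_ge_zero order_trans)
    then have perturbation:
        "\<bar>peak_sign * (v \<bullet> Astar_hess a (q - qstar) p v)\<bar> \<le> h * (norm v)\<^sup>2"
      using peak_sign_cases by (auto simp: abs_mult power2_eq_square algebra_simps)
    have "v \<bullet> H p v = v \<bullet> Astar_hess a (peak_sign *\<^sub>R qstar) p v
        + peak_sign * (v \<bullet> Astar_hess a (q - qstar) p v)"
      by (simp add: H_def Astar_hess_scaleR Astar_hess_diff inner_diff_right algebra_simps)
    then have "v \<bullet> H p v \<le> - \<gamma> * (norm v)\<^sup>2 + h * (norm v)\<^sup>2"
      using perturbation[THEN abs_le_D1] hess_Astar_near_peak[OF p, of v] by linarith
    then show ?thesis by (simp add: algebra_simps)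
  qed
  have "(G has_derivative H p) (at p)" if "p \<in> closed_segment x y" for p
    using that segment has_derivative_Astar_grad unfolding G_def H_def by blast
  then obtain p where p: "p \<in> closed_segment x y"
    and mvt: "(G y - G x) \<bullet> (y - x) = (y - x) \<bullet> H p (y - x)"
    using mean_value_inner_segment by blast
  have "G x = 0" "G y = 0"
    using Astar_grad_Xset x(1) y(1) by (simp_all add: G_def Astar_grad_scaleR)
  with mvt have "0 \<le> - (\<gamma> - h) * (norm (y - x))\<^sup>2"
    using strictly_concave[OF p, of "y - x"] by simp
  moreover have "0 < (\<gamma> - h) * (norm (y - x))\<^sup>2" using h \<open>x \<noteq> y\<close> by simp
  ultimately show False by linarith
qed

lemma Xset_near_peak_dist:
  assumes grad_close: "norm (Astar_grad a (q - qstar) z) \<le> g"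
    and z: "z \<in> Xset a \<Omega> q" "norm (z - \<xi>) \<le> \<tau>"
  shows "norm (z - \<xi>) \<le> g / \<gamma>"
proof -
  define u where "u = z - \<xi>"
  define G where "G = Astar_grad a (peak_sign *\<^sub>R qstar)"
  define H where "H = Astar_hess a (peak_sign *\<^sub>R qstar)"
  have "norm (\<xi> - \<xi>) \<le> \<tau>" "z \<in> \<Omega>"
    using order_trans[OF norm_ge_zero z(2)] z(1) by (simp_all add: Xset_def)
  note segment = closed_segment_subset_peak_nbhd[OF peak_in_domain this z(2)]
  have "(G has_derivative H p) (at p)" if "p \<in> closed_segment \<xi> z" for p
    using that segment has_derivative_Astar_grad unfolding G_def H_def by blast
  then obtain p where p: "p \<in> closed_segment \<xi> z" and mvt: "(G z - G \<xi>) \<bullet> u = u \<bullet> H p u"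
    unfolding u_def using mean_value_inner_segment by blast
  have "G \<xi> = 0" by (simp add: G_def Astar_grad_scaleR Astar_grad_peak)
  moreover have "G z = - peak_sign *\<^sub>R Astar_grad a (q - qstar) z"
    using Astar_grad_Xset[OF z(1)] by (simp add: G_def Astar_grad_scaleR Astar_grad_diff)
  moreover have "p \<in> \<Omega>" "norm (p - \<xi>) \<le> \<tau>"
    using p segment mem_peak_nbhd by blast+
  ultimately have "\<gamma> * (norm u)\<^sup>2 \<le> peak_sign * (Astar_grad a (q - qstar) z \<bullet> u)"
    using mvt hess_Astar_near_peak[of p u] by (simp add: H_def)
  also have "\<dots> \<le> norm (Astar_grad a (q - qstar) z) * norm u"
    using peak_sign_cases norm_cauchy_schwarz[of _ u] Cauchy_Schwarz_ineq2[of _ u]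
    by (auto simp: abs_le_iff)
  also have "\<dots> \<le> g * norm u" using grad_close by (simp add: mult_right_mono)
  finally have "\<gamma> * (norm u)\<^sup>2 \<le> g * norm u" .
  moreover have "0 \<le> g" using grad_close norm_ge_zero order_trans by blast
  ultimately show ?thesis
    using gamma_pos by (cases "u = 0") (auto simp: u_def power2_eq_square field_simps)
qed

end

theorem mainTheorem7:
  fixes \<Omega> :: "'a::euclidean_space set"
    and a :: "'m::finite \<Rightarrow> 'a \<Rightarrow> real"
    and f :: "real^'m \<Rightarrow> real"
    and L :: real and gradf :: "real^'m \<Rightarrow> real^'m"
    and s :: nat and xi :: "nat \<Rightarrow> 'a" and alpha :: "nat \<Rightarrow> real"
    and \<mu>star :: "'a measure \<times> 'a measure"
    and qstar :: "real^'m"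
    and tau0 gamma :: real
    and Om :: "nat \<Rightarrow> 'a set" and qs :: "nat \<Rightarrow> real^'m"
    and k :: nat
  defines "kappa \<equiv> Sup {\<bar>Astar a q x\<bar> | q x. norm q \<le> 1 \<and> x \<in> \<Omega>}"
    and "kgrad \<equiv> Sup {norm (grad (Astar a q) x) | q x. norm q \<le> 1 \<and> x \<in> \<Omega>}"
    and "khess \<equiv> Sup {onorm (hess (Astar a q) x) | q x. norm q \<le> 1 \<and> x \<in> \<Omega>}"
    and "pdist \<equiv> (\<lambda>x. INF i\<in>{1..s}. ereal (norm (x - xi i)))"
  assumes \<Omega>: "open \<Omega>" "convex \<Omega>" "\<Omega> \<noteq> {}"
    and a_C0: "\<And>i. C0_on \<Omega> (a i)"
    and a_C2: "\<And>i. C2_on \<Omega> (a i)"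
    and a_bdd: "\<And>i. bounded (grad (a i) ` \<Omega>)"
      "\<And>i. bounded ((\<lambda>x. onorm (hess (a i) x)) ` \<Omega>)"
    and f_convex: "convex_on UNIV f"
    and f_bdd: "bdd_below (range f)"
    and f_grad: "\<And>y. (f has_derivative (\<lambda>h. gradf y \<bullet> h)) (at y)"
    and f_lip: "L-lipschitz_on UNIV gradf"
    and xi_inj: "inj_on xi {1..s}" and xi_in: "xi ` {1..s} \<subseteq> \<Omega>"
    and alpha_nz: "\<And>i. i \<in> {1..s} \<Longrightarrow> alpha i \<noteq> 0"
    and \<mu>star_meas: "signed_on \<Omega> \<mu>star"
    and \<mu>star_dirac: "\<And>A. A \<in> sets borel \<Longrightarrow>
                       sval \<mu>star A = (\<Sum>i\<in>{i\<in>{1..s}. xi i \<in> A}. alpha i)"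
    and P_unique: "\<And>\<nu>. primal_sol \<Omega> a f \<nu> \<longleftrightarrow>
                     signed_on \<Omega> \<nu> \<and> (\<forall>A\<in>sets borel. sval \<nu> A = sval \<mu>star A)"
    and qstar_sol: "dual_sol a f \<Omega> qstar"
    and no_gap: "ereal (Jfun \<Omega> a f \<mu>star) = - fconj f qstar"
    and qstar_one: "\<And>x. x \<in> \<Omega> \<Longrightarrow> \<bar>Astar a qstar x\<bar> = 1 \<longleftrightarrow> x \<in> xi ` {1..s}"
    and tau0: "tau0 > 0" and gamma: "gamma > 0"
    and near: "\<And>x. x \<in> \<Omega> \<Longrightarrow> pdist x \<le> ereal tau0 \<Longrightarrow>
                 \<bar>Astar a qstar x\<bar> \<ge> gamma * tau0\<^sup>2 / 2 \<and>
                 (\<forall>v. v \<bullet> hess (\<lambda>y. \<bar>Astar a qstar y\<bar>) x v \<le> - gamma * (norm v)\<^sup>2)"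
    and far: "\<And>x. x \<in> \<Omega> \<Longrightarrow> pdist x \<ge> ereal tau0 \<Longrightarrow>
                 \<bar>Astar a qstar x\<bar> \<le> 1 - gamma * tau0\<^sup>2 / 2"
    and Om0: "Om 0 \<subseteq> \<Omega>"
    and qs_sol: "\<And>j. dual_sol a f (Om j) (qs j)"
    and Om_step: "\<And>j. Om (Suc j) = Om j \<union> Xset a \<Omega> (qs j)"
    and close: "norm (qs k - qstar) < gamma * min (tau0\<^sup>2 / (2 * kappa)) (min (tau0 / kgrad) (1 / khess))"
  shows "hdist (xi ` {1..s}) (Xset a \<Omega> (qs k)) \<le> ereal (kgrad / gamma * norm (qs k - qstar))
         \<and> (\<forall>i\<in>{1..s}.
              (\<forall>x\<in>Xset a \<Omega> (qs k). \<forall>y\<in>Xset a \<Omega> (qs k).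
                  norm (x - xi i) \<le> tau0 \<longrightarrow> norm (y - xi i) \<le> tau0 \<longrightarrow> x = y)
            \<and> (\<forall>x\<in>\<Omega>. norm (x - xi i) \<le> tau0 \<longrightarrow>
                  Astar a (qs k) x \<noteq> 0 \<and> sgn (Astar a (qs k) x) = sgn (Astar a qstar (xi i))))"
proof -
  interpret C2_family \<Omega> a using \<Omega>(1) a_C2 by unfold_locales
  define n where "n = norm (qs k - qstar)"
  define c where "c = gamma * tau0\<^sup>2 / 2"
  have "kappa * n < c" "khess * n < gamma"
    using bounds_of_less_mult_min[OF close[folded n_def] _ gamma tau0]
    by (simp_all add: n_def c_def)
  have small: "\<bar>Astar a (qs k - qstar) x\<bar> < c" if "x \<in> \<Omega>" for x
    using abs_Astar_le_Sup[of \<Omega> a, OF a_C0 that, where q = "qs k - qstar", folded kappa_def]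
      \<open>kappa * n < c\<close>
    by (simp add: n_def)
  have grad_small: "norm (Astar_grad a (qs k - qstar) x) \<le> kgrad * n" if "x \<in> \<Omega>" for x
    using norm_Astar_grad_le_Sup[OF a_bdd(1) that, folded kgrad_def] by (simp add: n_def)
  have hess_small: "norm (Astar_hess a (qs k - qstar) x v) \<le> khess * n * norm v"
    if "x \<in> \<Omega>" for x v
    using norm_Astar_hess_le_Sup[OF a_bdd(2) that, folded khess_def] by (simp add: n_def)
  have peak: "isolated_peak \<Omega> a qstar (xi i) tau0 gamma c" if i: "i \<in> {1..s}" for i
  proof unfold_locales
    show "xi i \<in> \<Omega>" using xi_in i by auto
    then show "\<bar>Astar a qstar (xi i)\<bar> = 1" using qstar_one i by auto
    have "pdist x \<le> ereal tau0" if "norm (x - xi i) \<le> tau0" for x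
      unfolding pdist_def using i that by (intro INF_lower2) auto
    then show "c \<le> \<bar>Astar a qstar x\<bar>
        \<and> (\<forall>v. v \<bullet> hess (\<lambda>y. \<bar>Astar a qstar y\<bar>) x v \<le> - gamma * (norm v)\<^sup>2)"
      if "x \<in> \<Omega>" "norm (x - xi i) \<le> tau0" for x
      using near that by (simp add: c_def)
  qed (use \<Omega> qstar_sol gamma tau0 in \<open>auto simp: c_def dual_sol_def\<close>)
  have X_near: "Xset a \<Omega> (qs k) \<subseteq> (\<Union>i\<in>{1..s}. ball (xi i) tau0)"
    using Xset_subset_near_support[OF far[unfolded pdist_def, folded c_def] small] .
  have "hdist (xi ` {1..s}) (Xset a \<Omega> (qs k)) \<le> ereal (kgrad / gamma * n)"
  proof (rule hdist_le)
    fix z assume z: "z \<in> Xset a \<Omega> (qs k)"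
    with X_near obtain i where i: "i \<in> {1..s}" "norm (z - xi i) \<le> tau0"
      by (force simp: dist_norm norm_minus_commute)
    with z have "norm (z - xi i) \<le> kgrad * n / gamma"
      using isolated_peak.Xset_near_peak_dist[OF peak[OF i(1)] grad_small] by (simp add: Xset_def)
    with i(1) show "\<exists>y\<in>xi ` {1..s}. dist y z \<le> kgrad / gamma * n"
      by (force simp: dist_norm norm_minus_commute)
  qed
  moreover have "\<forall>x\<in>Xset a \<Omega> (qs k). \<forall>y\<in>Xset a \<Omega> (qs k).
      norm (x - xi i) \<le> tau0 \<longrightarrow> norm (y - xi i) \<le> tau0 \<longrightarrow> x = y" if "i \<in> {1..s}" for i
    using isolated_peak.Xset_near_peak_unique[OF peak[OF that] hess_small \<open>khess * n < gamma\<close>]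
    by blast
  moreover have "\<forall>x\<in>\<Omega>. norm (x - xi i) \<le> tau0 \<longrightarrow>
      Astar a (qs k) x \<noteq> 0 \<and> sgn (Astar a (qs k) x) = sgn (Astar a qstar (xi i))"
    if "i \<in> {1..s}" for i
    using isolated_peak.sgn_Astar_perturbed[OF peak[OF that] _ _ small] by blast
  ultimately show ?thesis by (simp add: n_def)
qed

end
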